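(* In the setting of the context, the marginal density of $\alpha T$ is $$f_{\alpha T}(t)\propto t^{\alpha_0-1}e^{-(b_0/\alpha)t}\prod_{i=1}^d\frac1{((t))_{n_i}}\Big(\sum_{h=m}^{n}\frac{c_h}{((\alpha_0))_h}t^h\Big),\qquad t>0,$$ where $n=\sum_{i}n_i$, $m=\sum_{j=1}^km_{\bullet j}$, and $$c_h=\sum_{h_1+\dots+h_k=h,\ m_{\bullet j}\le h_j\le n_{\bullet j}}\ \prod_{j=1}^k\Gamma(h_j)\,S(n_{1j},\dots,n_{dj};h_j).$$
   Context: $((t))_n=\Gamma(t+n)/\Gamma(t)$. Setting: parameters $\alpha,\alpha_0,b_0>0$; integers $n_{ij}\ge0$ ($i=1,\dots,d$, $j=1,\dots,k$) with $n_i=\sum_jn_{ij}\ge1$ and $n_{\bullet j}=\sum_in_{ij}\ge1$; $m_{ij}=\min(1,n_{ij})$, $m_{\bullet j}=\sum_im_{ij}$. $\Delta^k=\{\mathbf v\in[0,1]^{k+1}:\sum_{j=0}^kv_j=1\}$. The pair $(\alpha T,\mathbf V)\in(0,\infty)\times\Delta^k$ has joint density $f_{\alpha T,\mathbf V}(t,\mathbf v)\propto t^{\alpha_0-1}e^{-(b_0/\alpha)t}v_0^{\alpha_0-1}\prod_{i=1}^d\frac1{((t))_{n_i}}\prod_{j=1}^k\big(v_j^{-1}\prod_{i=1}^d((tv_j))_{n_{ij}}\big)$ (w.r.t. Lebesgue measure in $t$ and $(v_1,\dots,v_k)$). With $S(q,h)$ the unsigned Stirling numbers of the first kind, $S(q_1,\dots,q_d;h)=\sum_{h_1+\dots+h_d=h,\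 0\le h_i\le q_i}\prod_iS(q_i,h_i)$. *)

theory Defs
  imports "HOL-Analysis.Analysis" "HOL-Combinatorics.Stirling"
begin

text \<open>Rising factorial ((t))_n = Gamma(t+n)/Gamma(t) is the library's pochhammer t n.
  Counts are indexed n_cnt i j with i in {1..d}, j in {1..k}.\<close>

definition rowsum :: "(nat \<Rightarrow> nat \<Rightarrow> nat) \<Rightarrow> nat \<Rightarrow> nat \<Rightarrow> nat" where
  "rowsum nc k i = (\<Sum>j\<in>{1..k}. nc i j)"

definition colsum :: "(nat \<Rightarrow> nat \<Rightarrow> nat) \<Rightarrow> nat \<Rightarrow> nat \<Rightarrow> nat" where
  "colsum nc d j = (\<Sum>i\<in>{1..d}. nc i j)"

definition colmin :: "(nat \<Rightarrow> nat \<Rightarrow> nat) \<Rightarrow> nat \<Rightarrow> nat \<Rightarrow> nat" where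
  "colmin nc d j = (\<Sum>i\<in>{1..d}. min 1 (nc i j))"

definition stirling_multi :: "nat \<Rightarrow> (nat \<Rightarrow> nat) \<Rightarrow> nat \<Rightarrow> nat" where
  "stirling_multi d q h =
     (\<Sum>hs\<in>{hs \<in> PiE {1..d} (\<lambda>i. {0..q i}). (\<Sum>i\<in>{1..d}. hs i) = h}.
        \<Prod>i\<in>{1..d}. stirling (q i) (hs i))"

definition coeff_c :: "(nat \<Rightarrow> nat \<Rightarrow> nat) \<Rightarrow> nat \<Rightarrow> nat \<Rightarrow> nat \<Rightarrow> real" where
  "coeff_c nc d k h =
     (\<Sum>hs\<in>{hs \<in> PiE {1..k} (\<lambda>j. {colmin nc d j..colsum nc d j}). (\<Sum>j\<in>{1..k}. hs j) = h}.
        \<Prod>j\<in>{1..k}. Gamma (real (hs j)) * real (stirling_multi d (\<lambda>i. nc i j) (hs j)))"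

text \<open>Unnormalised joint density of (alpha T, V), as a function of t and (v_1,...,v_k),
  with v_0 = 1 - (v_1+...+v_k); zero outside the simplex.\<close>
definition joint_dens ::
  "real \<Rightarrow> real \<Rightarrow> real \<Rightarrow> (nat \<Rightarrow> nat \<Rightarrow> nat) \<Rightarrow> nat \<Rightarrow> nat \<Rightarrow> real \<Rightarrow> (nat \<Rightarrow> real) \<Rightarrow> real" where
  "joint_dens \<alpha> \<alpha>0 b0 nc d k t v =
     (if (\<forall>j\<in>{1..k}. 0 \<le> v j) \<and> (\<Sum>j\<in>{1..k}. v j) \<le> 1 then
        t powr (\<alpha>0 - 1) * exp (- (b0 / \<alpha>) * t) * (1 - (\<Sum>j\<in>{1..k}. v j)) powr (\<alpha>0 - 1)
        * (\<Prod>i\<in>{1..d}. 1 / pochhammer t (rowsum nc k i))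
        * (\<Prod>j\<in>{1..k}. inverse (v j) * (\<Prod>i\<in>{1..d}. pochhammer (t * v j) (nc i j)))
      else 0)"

definition marg_dens ::
  "real \<Rightarrow> real \<Rightarrow> real \<Rightarrow> (nat \<Rightarrow> nat \<Rightarrow> nat) \<Rightarrow> nat \<Rightarrow> nat \<Rightarrow> real \<Rightarrow> real" where
  "marg_dens \<alpha> \<alpha>0 b0 nc d k t =
     t powr (\<alpha>0 - 1) * exp (- (b0 / \<alpha>) * t)
     * (\<Prod>i\<in>{1..d}. 1 / pochhammer t (rowsum nc k i))
     * (\<Sum>h\<in>{(\<Sum>j\<in>{1..k}. colmin nc d j)..(\<Sum>i\<in>{1..d}. rowsum nc k i)}.
          coeff_c nc d k h / pochhammer \<alpha>0 h * t ^ h)"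

end

theory Submission
  imports Defs
begin

text \<open>Each column factor \<open>v_j^(-1) \<Prod>_i ((t v_j))_(n_ij)\<close> of the joint density is expanded,
  via the Stirling generating function of the rising factorial, into a polynomial in \<open>t v_j\<close>
  whose lowest degree is \<open>m_j \<ge> 1\<close>. Multiplying out, the density becomes a finite combination
  of Dirichlet kernels \<open>v_0^(\<alpha>0 - 1) \<Prod>_j v_j^(h_j - 1)\<close> on the simplex, and the Dirichlet
  integral \<open>\<Gamma>(\<alpha>0) \<Prod>_j \<Gamma>(h_j) / \<Gamma>(\<alpha>0 + h) = \<Prod>_j \<Gamma>(h_j) / ((\<alpha>0))_h\<close> is exactly the
  factor that turns the coefficient of \<open>t^h\<close> into \<open>c_h / ((\<alpha>0))_h\<close>; the normalising
  constant is 1.\<close>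

lemma nn_integral_Beta_real:
  fixes p q :: real
  assumes "p > 0" "q > 0"
  shows "(\<integral>\<^sup>+u. ennreal (indicator {0..1} u * (u powr (p-1) * (1-u) powr (q-1))) \<partial>lborel)
    = ennreal (Beta p q)"
proof -
  have eq: "(\<lambda>u. indicator {0..1} u * (u powr (p-1) * (1-u) powr (q-1)))
      = (\<lambda>u. if u \<in> {0..1::real} then u powr (p-1) * (1-u) powr (q-1) else 0)"
    by (auto simp: indicator_def fun_eq_iff)
  have "((\<lambda>u. indicator {0..1} u * (u powr (p-1) * (1-u) powr (q-1))) has_integral Beta p q) UNIV"
    unfolding eq has_integral_restrict_UNIV by (rule has_integral_Beta_real[OF assms])
  then show ?thesis
    by (intro nn_integral_has_integral_lborel) (auto simp: indicator_def)
qed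

lemma Beta_real_nonneg: "p > 0 \<Longrightarrow> q > 0 \<Longrightarrow> Beta p q \<ge> (0::real)"
  by (simp add: Beta_altdef rGamma_inverse_Gamma)

lemma nn_integral_Beta_real_scaled:
  fixes p q s :: real
  assumes p: "p > 0" and q: "q > 0" and s: "s \<ge> 0"
  shows "(\<integral>\<^sup>+y. ennreal (indicator {0..s} y * y powr (p-1) * (s-y) powr (q-1)) \<partial>lborel)
     = ennreal (s powr (p+q-1) * Beta p q)"
proof (cases "s = 0")
  case True
  then have "(\<lambda>y. ennreal (indicator {0..s} y * y powr (p-1) * (s-y) powr (q-1))) = (\<lambda>y. 0)"
    by (auto simp: indicator_def fun_eq_iff)
  then show ?thesis by (simp add: True)
next
  case False
  with s have s: "s > 0" by simp
  have integrand: "ennreal (indicator {0..s} (0 + s*u) * (0 + s*u) powr (p-1) * (s - (0 + s*u)) powr (q-1))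
      = ennreal (s powr (p+q-2)) * ennreal (indicator {0..1} u * (u powr (p-1) * (1-u) powr (q-1)))"
    for u
  proof (cases "u \<in> {0..1}")
    case True
    have "s powr (p-1) * s powr (q-1) = s powr (p+q-2)"
      using s by (simp add: powr_add[symmetric])
    moreover have "(s*u) powr (p-1) * (s*(1-u)) powr (q-1)
        = s powr (p-1) * s powr (q-1) * (u powr (p-1) * (1-u) powr (q-1))"
      using s True by (simp add: powr_mult)
    moreover have "s - s*u = s*(1-u)" by (simp add: algebra_simps)
    ultimately show ?thesis
      using True s by (simp add: indicator_def mult_le_cancel_left1 ennreal_mult'[symmetric])
  next
    case False
    then have "s*u \<notin> {0..s}" using s by (auto simp: zero_le_mult_iff mult_le_cancel_left1)
    with False show ?thesis by simp
  qed
  have "(\<integral>\<^sup>+y. ennreal (indicator {0..s} y * y powr (p-1) * (s-y) powr (q-1)) \<partial>lborel)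
      = ennreal s * (\<integral>\<^sup>+u. ennreal (indicator {0..s} (0 + s*u) * (0 + s*u) powr (p-1)
          * (s - (0 + s*u)) powr (q-1)) \<partial>lborel)"
    using s by (subst nn_integral_real_affine[where t = 0 and c = s]) auto
  also have "\<dots> = ennreal s * (ennreal (s powr (p+q-2)) * ennreal (Beta p q))"
    by (simp only: integrand) (simp add: nn_integral_cmult nn_integral_Beta_real[OF p q])
  also have "\<dots> = ennreal (s powr (p+q-1) * Beta p q)"
  proof -
    have "s * s powr (p+q-2) = s powr (p+q-1)"
      using s by (simp add: powr_add[symmetric] powr_mult_base)
    then show ?thesis
      using s Beta_real_nonneg[OF p q] by (simp add: ennreal_mult''[symmetric] mult.assoc)
  qed
  finally show ?thesis .
qed

definition simplex_le :: "'a set \<Rightarrow> real \<Rightarrow> ('a \<Rightarrow> real) set" where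
  "simplex_le I s = {v. (\<forall>i\<in>I. 0 \<le> v i) \<and> sum v I \<le> s}"

definition dirichlet_kernel ::
  "'a set \<Rightarrow> real \<Rightarrow> ('a \<Rightarrow> real) \<Rightarrow> real \<Rightarrow> ('a \<Rightarrow> real) \<Rightarrow> real" where
  "dirichlet_kernel I a b s v =
     indicator (simplex_le I s) v * (s - sum v I) powr (a - 1) * (\<Prod>j\<in>I. v j powr (b j - 1))"

lemma dirichlet_kernel_nonneg: "dirichlet_kernel I a b s v \<ge> 0"
  unfolding dirichlet_kernel_def by (intro mult_nonneg_nonneg prod_nonneg) auto

lemma borel_measurable_dirichlet_kernel [measurable]:
  assumes "finite I"
  shows "dirichlet_kernel I a b s \<in> borel_measurable (PiM I (\<lambda>_. lborel))"
proof -
  let ?M = "PiM I (\<lambda>_. lborel)"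
  have "simplex_le I s \<inter> space ?M = Pi\<^sub>E I (\<lambda>_. {0..}) \<inter> (\<lambda>v. sum v I) -` {..s} \<inter> space ?M"
    by (auto simp: simplex_le_def space_PiM)
  also have "\<dots> \<in> sets ?M"
    using assms by measurable
  finally have [measurable]: "simplex_le I s \<inter> space ?M \<in> sets ?M" .
  have "(\<lambda>v. indicator (simplex_le I s \<inter> space ?M) v * (s - sum v I) powr (a - 1)
      * (\<Prod>j\<in>I. v j powr (b j - 1)) :: real) \<in> borel_measurable ?M"
    using assms by measurable
  then show ?thesis
    by (rule measurable_cong[THEN iffD1, rotated]) (auto simp: dirichlet_kernel_def indicator_def)
qed

lemma dirichlet_kernel_insert:
  assumes "finite I" "j \<notin> I"
  shows "dirichlet_kernel (insert j I) a b s (v(j := y))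
    = indicator {0..s} y * y powr (b j - 1) * dirichlet_kernel I a b (s - y) v"
proof -
  have "sum (v(j := y)) I = sum v I" "(\<Prod>i\<in>I. (v(j := y)) i powr (b i - 1)) = (\<Prod>i\<in>I. v i powr (b i - 1))"
    using assms(2) by (auto intro!: sum.cong prod.cong)
  then have sum: "sum (v(j := y)) (insert j I) = y + sum v I"
    and prod: "(\<Prod>i\<in>insert j I. (v(j := y)) i powr (b i - 1)) = y powr (b j - 1) * (\<Prod>i\<in>I. v i powr (b i - 1))"
    using assms by simp_all
  have "v(j := y) \<in> simplex_le (insert j I) s \<longleftrightarrow> y \<in> {0..s} \<and> v \<in> simplex_le I (s - y)"
  proof -
    have "(\<forall>i\<in>insert j I. 0 \<le> (v(j := y)) i) \<longleftrightarrow> 0 \<le> y \<and> (\<forall>i\<in>I. 0 \<le> v i)"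
      using assms(2) by auto
    moreover have "(\<forall>i\<in>I. 0 \<le> v i) \<Longrightarrow> 0 \<le> sum v I" by (rule sum_nonneg) simp
    ultimately show ?thesis
      unfolding simplex_le_def mem_Collect_eq sum by auto
  qed
  then have "indicator (simplex_le (insert j I) s) (v(j := y))
      = (indicator {0..s} y * indicator (simplex_le I (s - y)) v :: real)"
    by (simp add: indicator_def)
  then show ?thesis
    unfolding dirichlet_kernel_def sum prod by (simp add: algebra_simps)
qed

theorem nn_integral_dirichlet_kernel:
  assumes "finite I" "a > 0" "\<And>j. j \<in> I \<Longrightarrow> b j > 0" "s \<ge> 0"
  shows "(\<integral>\<^sup>+v. ennreal (dirichlet_kernel I a b s v) \<partial>PiM I (\<lambda>_. lborel))
     = ennreal (s powr (a + sum b I - 1) * (Gamma a * (\<Prod>j\<in>I. Gamma (b j)) / Gamma (a + sum b I)))"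
  using assms(1,3,4)
proof (induction I arbitrary: s rule: finite_induct)
  case (empty s)
  have "Gamma a \<noteq> 0" using Gamma_real_pos[OF \<open>a > 0\<close>] by simp
  then show ?case
    using empty by (simp add: PiM_empty nn_integral_count_space_finite dirichlet_kernel_def simplex_le_def)
next
  case (insert j I s)
  interpret product_sigma_finite "\<lambda>_. lborel" by standard
  define B where "B = sum b I"
  define K where "K = Gamma a * (\<Prod>i\<in>I. Gamma (b i)) / Gamma (a + B)"
  have bj: "b j > 0" and B: "B \<ge> 0" and K: "K \<ge> 0"
    using insert.prems \<open>a > 0\<close> unfolding B_def K_def
    by (auto intro!: sum_nonneg divide_nonneg_nonneg mult_nonneg_nonneg prod_nonneg
        intro: less_imp_le Gamma_real_pos add_pos_nonneg)
  have IH: "(\<integral>\<^sup>+v. ennreal (dirichlet_kernel I a b (s - y) v) \<partial>PiM I (\<lambda>_. lborel))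
      = ennreal ((s - y) powr (a + B - 1) * K)" if "y \<in> {0..s}" for y
    unfolding B_def K_def by (rule insert.IH) (use that insert.prems in auto)
  have "(\<integral>\<^sup>+v. ennreal (dirichlet_kernel (insert j I) a b s v) \<partial>PiM (insert j I) (\<lambda>_. lborel))
     = (\<integral>\<^sup>+y. \<integral>\<^sup>+v. ennreal (indicator {0..s} y * y powr (b j - 1))
          * ennreal (dirichlet_kernel I a b (s - y) v) \<partial>PiM I (\<lambda>_. lborel) \<partial>lborel)"
    using insert.hyps
    by (subst product_nn_integral_insert_rev)
      (auto simp: dirichlet_kernel_insert dirichlet_kernel_nonneg ennreal_mult indicator_def)
  also have "\<dots> = (\<integral>\<^sup>+y. ennreal (indicator {0..s} y * y powr (b j - 1) * (s - y) powr (a + B - 1)) * ennreal K \<partial>lborel)"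
    using IH K by (intro nn_integral_cong)
      (auto simp: nn_integral_cmult insert.hyps indicator_def ennreal_mult[symmetric] mult.assoc)
  also have "\<dots> = ennreal (s powr (b j + (a + B) - 1) * Beta (b j) (a + B)) * ennreal K"
    using nn_integral_Beta_real_scaled[OF bj _ \<open>s \<ge> 0\<close>, of "a + B"] \<open>a > 0\<close> B
    by (simp add: nn_integral_multc add_diff_eq)
  also have "\<dots> = ennreal (s powr (a + sum b (insert j I) - 1)
      * (Gamma a * (\<Prod>i\<in>insert j I. Gamma (b i)) / Gamma (a + sum b (insert j I))))"
  proof -
    have "Gamma (a + B) \<noteq> 0" using \<open>a > 0\<close> B by (intro less_imp_neq[symmetric] Gamma_real_pos) simp
    then have "Beta (b j) (a + B) * K = Gamma a * (\<Prod>i\<in>insert j I. Gamma (b i)) / Gamma (a + sum b (insert j I))"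
      using insert.hyps unfolding K_def B_def Beta_altdef rGamma_inverse_Gamma by (simp add: field_simps)
    moreover have e: "b j + (a + B) - 1 = a + sum b (insert j I) - 1" using insert.hyps by (simp add: B_def)
    ultimately show ?thesis
      using K Beta_real_nonneg[OF bj, of "a + B"] \<open>a > 0\<close> B unfolding e
      by (subst ennreal_mult[symmetric]) (auto simp: mult.assoc)
  qed
  finally show ?case .
qed

lemma nn_integral_dirichlet_kernel_nat:
  assumes "finite I" "a > 0" "\<And>j. j \<in> I \<Longrightarrow> hs j \<ge> 1"
  shows "(\<integral>\<^sup>+v. ennreal (dirichlet_kernel I a (\<lambda>j. real (hs j)) 1 v) \<partial>PiM I (\<lambda>_. lborel))
     = ennreal ((\<Prod>j\<in>I. Gamma (real (hs j))) / pochhammer a (sum hs I))"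
proof -
  have "a \<notin> \<int>\<^sub>\<le>\<^sub>0" using assms(2) by (auto elim!: nonpos_Ints_cases)
  then have "Gamma (a + real (sum hs I)) = pochhammer a (sum hs I) * Gamma a"
    using Gamma_real_pos[OF assms(2)] by (simp add: pochhammer_Gamma)
  moreover have "Gamma a \<noteq> 0" using Gamma_real_pos[OF assms(2)] by simp
  ultimately show ?thesis
    using nn_integral_dirichlet_kernel[OF assms(1,2), of "\<lambda>j. real (hs j)" 1] assms(3)
    by (force simp: of_nat_sum)
qed

lemma prod_Gamma_div_pochhammer_nonneg:
  assumes "a > 0" "\<And>j. j \<in> I \<Longrightarrow> hs j \<ge> 1"
  shows "(\<Prod>j\<in>I. Gamma (real (hs j))) / pochhammer a (sum hs I) \<ge> (0::real)"
proof -
  have "Gamma (real (hs j)) \<ge> 0" if "j \<in> I" for j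
    using assms(2)[OF that] by (intro Gamma_real_nonneg) simp
  then show ?thesis
    using assms(1) by (intro divide_nonneg_pos prod_nonneg) (auto intro: pochhammer_pos)
qed

lemma nn_integral_sum_cmult_real:
  fixes c :: "'i \<Rightarrow> real" and f :: "'i \<Rightarrow> 'a \<Rightarrow> real"
  assumes "finite H" "\<And>h. h \<in> H \<Longrightarrow> c h \<ge> 0" "\<And>h x. h \<in> H \<Longrightarrow> f h x \<ge> 0"
    and "\<And>h. h \<in> H \<Longrightarrow> f h \<in> borel_measurable M"
    and "\<And>h. h \<in> H \<Longrightarrow> (\<integral>\<^sup>+x. ennreal (f h x) \<partial>M) = ennreal (r h)"
    and "\<And>h. h \<in> H \<Longrightarrow> r h \<ge> 0"
  shows "(\<integral>\<^sup>+x. ennreal (\<Sum>h\<in>H. c h * f h x) \<partial>M) = ennreal (\<Sum>h\<in>H. c h * r h)"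
proof -
  have "(\<integral>\<^sup>+x. ennreal (\<Sum>h\<in>H. c h * f h x) \<partial>M) = (\<integral>\<^sup>+x. (\<Sum>h\<in>H. ennreal (c h) * ennreal (f h x)) \<partial>M)"
    using assms(2,3) by (intro nn_integral_cong) (simp add: sum_ennreal[symmetric] ennreal_mult)
  also have "\<dots> = (\<Sum>h\<in>H. ennreal (c h) * (\<integral>\<^sup>+x. ennreal (f h x) \<partial>M))"
    using assms(4) by (simp add: nn_integral_sum nn_integral_cmult)
  also have "\<dots> = ennreal (\<Sum>h\<in>H. c h * r h)"
    using assms(2,5,6) by (simp add: sum_ennreal[symmetric] ennreal_mult)
  finally show ?thesis .
qed

lemma prod_pochhammer_eq_stirling_multi:
  fixes x :: "'a :: comm_semiring_1"
  shows "(\<Prod>i\<in>{1..d}. pochhammer x (q i)) = (\<Sum>h\<le>sum q {1..d}. of_nat (stirling_multi d q h) * x ^ h)"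
proof -
  define P where "P = PiE {1..d} (\<lambda>i. {..q i})"
  have "finite P" unfolding P_def by (intro finite_PiE) auto
  have "(\<Prod>i\<in>{1..d}. pochhammer x (q i)) = (\<Prod>i\<in>{1..d}. \<Sum>h\<le>q i. of_nat (stirling (q i) h) * x ^ h)"
    by (simp add: stirling_pochhammer)
  also have "\<dots> = (\<Sum>hs\<in>P. of_nat (\<Prod>i\<in>{1..d}. stirling (q i) (hs i)) * x ^ sum hs {1..d})"
    unfolding P_def by (subst prod_sum_PiE) (auto simp: prod.distrib power_sum)
  also have "\<dots> = (\<Sum>h\<le>sum q {1..d}. \<Sum>hs\<in>{hs \<in> P. sum hs {1..d} = h}.
      of_nat (\<Prod>i\<in>{1..d}. stirling (q i) (hs i)) * x ^ sum hs {1..d})"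
    by (rule sum.group[symmetric, OF \<open>finite P\<close>]) (auto simp: P_def PiE_def Pi_def intro!: sum_mono)
  also have "\<dots> = (\<Sum>h\<le>sum q {1..d}. of_nat (stirling_multi d q h) * x ^ h)"
    unfolding stirling_multi_def P_def atLeast0AtMost[symmetric]
    by (intro sum.cong refl) (simp add: sum_distrib_right)
  finally show ?thesis .
qed

text \<open>A factor \<open>((x))\<^sub>q\<close> with \<open>q \<ge> 1\<close> has no constant term, so \<open>S(q\<^sub>1,\<dots>,q\<^sub>d; h)\<close> vanishes below
  the number of nonzero \<open>q\<^sub>i\<close>.\<close>
lemma stirling_multi_eq_0:
  assumes "h < (\<Sum>i\<in>{1..d}. min 1 (q i))"
  shows "stirling_multi d q h = 0"
  unfolding stirling_multi_def
proof (intro sum.neutral ballI)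
  fix hs assume hs: "hs \<in> {hs \<in> PiE {1..d} (\<lambda>i. {0..q i}). (\<Sum>i\<in>{1..d}. hs i) = h}"
  show "(\<Prod>i\<in>{1..d}. stirling (q i) (hs i)) = 0"
  proof (rule ccontr)
    assume "(\<Prod>i\<in>{1..d}. stirling (q i) (hs i)) \<noteq> 0"
    then have "stirling (q i) (hs i) \<noteq> 0" if "i \<in> {1..d}" for i
      using that by auto
    then have "min 1 (q i) \<le> hs i" if "i \<in> {1..d}" for i
      using that by (cases "hs i"; cases "q i") force+
    then have "(\<Sum>i\<in>{1..d}. min 1 (q i)) \<le> h"
      using hs by (auto intro: sum_mono order.trans[OF _ eq_refl])
    with assms show False by simp
  qed
qed

lemma inverse_mult_prod_pochhammer:
  fixes t v :: real
  assumes "v \<ge> 0" "(\<Sum>i\<in>{1..d}. min 1 (q i)) \<ge> 1"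
  shows "inverse v * (\<Prod>i\<in>{1..d}. pochhammer (t * v) (q i))
    = (\<Sum>h\<in>{(\<Sum>i\<in>{1..d}. min 1 (q i))..sum q {1..d}}. real (stirling_multi d q h) * t ^ h * v powr (real h - 1))"
proof -
  define m where "m = (\<Sum>i\<in>{1..d}. min 1 (q i))"
  have expand: "(\<Prod>i\<in>{1..d}. pochhammer (t * v) (q i)) = (\<Sum>h\<in>{m..sum q {1..d}}. real (stirling_multi d q h) * (t * v) ^ h)"
    unfolding prod_pochhammer_eq_stirling_multi
    by (rule sum.mono_neutral_right) (auto simp: m_def stirling_multi_eq_0)
  have "inverse v * v ^ h = v powr (real h - 1)" if "h \<ge> 1" for h
    using assms(1) that by (cases "v = 0") (auto simp: powr_diff powr_realpow field_simps)
  moreover have "m \<ge> 1" using assms(2) by (simp add: m_def)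
  ultimately have "(\<Sum>h\<in>{m..sum q {1..d}}. real (stirling_multi d q h) * t ^ h * (inverse v * v ^ h))
      = (\<Sum>h\<in>{m..sum q {1..d}}. real (stirling_multi d q h) * t ^ h * v powr (real h - 1))"
    by (intro sum.cong refl) simp
  with expand show ?thesis
    unfolding m_def[symmetric] by (simp add: sum_distrib_left power_mult_distrib mult_ac)
qed

definition exponent_box :: "(nat \<Rightarrow> nat \<Rightarrow> nat) \<Rightarrow> nat \<Rightarrow> nat \<Rightarrow> (nat \<Rightarrow> nat) set" where
  "exponent_box nc d k = PiE {1..k} (\<lambda>j. {colmin nc d j..colsum nc d j})"

definition stirling_weight :: "(nat \<Rightarrow> nat \<Rightarrow> nat) \<Rightarrow> nat \<Rightarrow> nat \<Rightarrow> (nat \<Rightarrow> nat) \<Rightarrow> real" where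
  "stirling_weight nc d k hs = (\<Prod>j\<in>{1..k}. real (stirling_multi d (\<lambda>i. nc i j) (hs j)))"

definition dens_prefactor ::
  "real \<Rightarrow> real \<Rightarrow> real \<Rightarrow> (nat \<Rightarrow> nat \<Rightarrow> nat) \<Rightarrow> nat \<Rightarrow> nat \<Rightarrow> real \<Rightarrow> real" where
  "dens_prefactor \<alpha> \<alpha>0 b0 nc d k t =
     t powr (\<alpha>0 - 1) * exp (- (b0 / \<alpha>) * t) * (\<Prod>i\<in>{1..d}. 1 / pochhammer t (rowsum nc k i))"

lemma dens_prefactor_nonneg: "t > 0 \<Longrightarrow> dens_prefactor \<alpha> \<alpha>0 b0 nc d k t \<ge> 0"
  unfolding dens_prefactor_def
  by (intro mult_nonneg_nonneg prod_nonneg) (simp_all add: pochhammer_pos less_imp_le)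

lemma finite_exponent_box: "finite (exponent_box nc d k)"
  unfolding exponent_box_def by (intro finite_PiE) auto

lemma colmin_ge_1:
  assumes "colsum nc d j \<ge> 1"
  shows "colmin nc d j \<ge> 1"
proof (rule ccontr)
  assume "\<not> colmin nc d j \<ge> 1"
  then have "colmin nc d j = 0" by simp
  then have "\<forall>i\<in>{1..d}. nc i j = 0" by (auto simp: colmin_def min_def split: if_splits)
  with assms show False by (simp add: colsum_def)
qed

lemma exponent_box_ge_1:
  assumes "\<And>j. j \<in> {1..k} \<Longrightarrow> colsum nc d j \<ge> 1" "hs \<in> exponent_box nc d k" "j \<in> {1..k}"
  shows "hs j \<ge> 1"
proof -
  have "hs j \<in> {colmin nc d j..colsum nc d j}"
    using assms(2,3) unfolding exponent_box_def by (rule PiE_mem)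
  then show ?thesis using colmin_ge_1[OF assms(1)[OF assms(3)]] by simp
qed

lemma prod_column_factors_eq_sum_exponent_box:
  assumes "\<And>j. j \<in> {1..k} \<Longrightarrow> colsum nc d j \<ge> 1" "\<And>j. j \<in> {1..k} \<Longrightarrow> v j \<ge> 0"
  shows "(\<Prod>j\<in>{1..k}. inverse (v j) * (\<Prod>i\<in>{1..d}. pochhammer (t * v j) (nc i j)))
    = (\<Sum>hs\<in>exponent_box nc d k. stirling_weight nc d k hs * t ^ sum hs {1..k}
        * (\<Prod>j\<in>{1..k}. v j powr (real (hs j) - 1)))"
proof -
  have "(\<Prod>j\<in>{1..k}. inverse (v j) * (\<Prod>i\<in>{1..d}. pochhammer (t * v j) (nc i j)))
      = (\<Prod>j\<in>{1..k}. \<Sum>h\<in>{colmin nc d j..colsum nc d j}.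
          real (stirling_multi d (\<lambda>i. nc i j) h) * t ^ h * v j powr (real h - 1))"
  proof (intro prod.cong refl)
    fix j assume j: "j \<in> {1..k}"
    show "inverse (v j) * (\<Prod>i\<in>{1..d}. pochhammer (t * v j) (nc i j))
      = (\<Sum>h\<in>{colmin nc d j..colsum nc d j}. real (stirling_multi d (\<lambda>i. nc i j) h) * t ^ h * v j powr (real h - 1))"
      using inverse_mult_prod_pochhammer[where v = "v j" and q = "\<lambda>i. nc i j" and t = t and d = d]
        assms(2)[OF j] colmin_ge_1[OF assms(1)[OF j]]
      by (simp add: colmin_def colsum_def)
  qed
  also have "\<dots> = (\<Sum>hs\<in>exponent_box nc d k. \<Prod>j\<in>{1..k}.
      real (stirling_multi d (\<lambda>i. nc i j) (hs j)) * t ^ hs j * v j powr (real (hs j) - 1))"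
    unfolding exponent_box_def by (rule prod_sum_PiE) auto
  finally show ?thesis
    by (simp add: stirling_weight_def prod.distrib power_sum)
qed

lemma joint_dens_eq_sum_dirichlet_kernel:
  assumes "\<And>j. j \<in> {1..k} \<Longrightarrow> colsum nc d j \<ge> 1"
  shows "joint_dens \<alpha> \<alpha>0 b0 nc d k t v
    = (\<Sum>hs\<in>exponent_box nc d k. dens_prefactor \<alpha> \<alpha>0 b0 nc d k t * stirling_weight nc d k hs
        * t ^ sum hs {1..k} * dirichlet_kernel {1..k} \<alpha>0 (\<lambda>j. real (hs j)) 1 v)"
proof (cases "v \<in> simplex_le {1..k} 1")
  case True
  then show ?thesis
    using prod_column_factors_eq_sum_exponent_box[OF assms, where v = v and t = t]
    by (simp add: simplex_le_def joint_dens_def dens_prefactor_def dirichlet_kernel_def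
        sum_distrib_left mult_ac)
next
  case False
  then show ?thesis
    by (auto simp: simplex_le_def joint_dens_def dirichlet_kernel_def)
qed

lemma marg_dens_eq_sum_exponent_box:
  "marg_dens \<alpha> \<alpha>0 b0 nc d k t = dens_prefactor \<alpha> \<alpha>0 b0 nc d k t
    * (\<Sum>hs\<in>exponent_box nc d k. stirling_weight nc d k hs * t ^ sum hs {1..k}
        * ((\<Prod>j\<in>{1..k}. Gamma (real (hs j))) / pochhammer \<alpha>0 (sum hs {1..k})))"
proof -
  define M where "M = (\<Sum>j\<in>{1..k}. colmin nc d j)"
  define T where "T = (\<Sum>i\<in>{1..d}. rowsum nc k i)"
  have T: "T = (\<Sum>j\<in>{1..k}. colsum nc d j)"
    unfolding T_def rowsum_def colsum_def by (rule sum.swap)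
  have "(\<Sum>h\<in>{M..T}. coeff_c nc d k h / pochhammer \<alpha>0 h * t ^ h)
      = (\<Sum>h\<in>{M..T}. \<Sum>hs\<in>{hs \<in> exponent_box nc d k. sum hs {1..k} = h}.
          stirling_weight nc d k hs * t ^ sum hs {1..k}
          * ((\<Prod>j\<in>{1..k}. Gamma (real (hs j))) / pochhammer \<alpha>0 (sum hs {1..k})))"
    unfolding coeff_c_def exponent_box_def stirling_weight_def sum_divide_distrib sum_distrib_right
    by (intro sum.cong refl) (auto simp: prod.distrib mult_ac)
  also have "\<dots> = (\<Sum>hs\<in>exponent_box nc d k. stirling_weight nc d k hs * t ^ sum hs {1..k}
        * ((\<Prod>j\<in>{1..k}. Gamma (real (hs j))) / pochhammer \<alpha>0 (sum hs {1..k})))"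
    unfolding M_def T
    by (rule sum.group[OF finite_exponent_box])
      (auto simp: exponent_box_def PiE_def Pi_def intro!: sum_mono)
  finally show ?thesis
    unfolding marg_dens_def dens_prefactor_def M_def T_def by simp
qed

theorem mainTheorem19:
  fixes \<alpha> \<alpha>0 b0 :: real and nc :: "nat \<Rightarrow> nat \<Rightarrow> nat" and d k :: nat
  assumes "\<alpha> > 0" and "\<alpha>0 > 0" and "b0 > 0" and "d \<ge> 1" and "k \<ge> 1"
    and "\<And>i. i \<in> {1..d} \<Longrightarrow> rowsum nc k i \<ge> 1"
    and "\<And>j. j \<in> {1..k} \<Longrightarrow> colsum nc d j \<ge> 1"
  shows "\<exists>C>0. \<forall>t>0.
    (\<integral>\<^sup>+ v. ennreal (joint_dens \<alpha> \<alpha>0 b0 nc d k t v) \<partial>(PiM {1..k} (\<lambda>_. lborel)))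
      = ennreal (C * marg_dens \<alpha> \<alpha>0 b0 nc d k t)"
proof -
  let ?H = "exponent_box nc d k"
  let ?D = "\<lambda>hs. (\<Prod>j\<in>{1..k}. Gamma (real (hs j))) / pochhammer \<alpha>0 (sum hs {1..k})"
  have hs_ge_1: "\<And>j. j \<in> {1..k} \<Longrightarrow> hs j \<ge> 1" if "hs \<in> ?H" for hs
    using exponent_box_ge_1[OF assms(7) that] .
  have integral_kernel: "(\<integral>\<^sup>+v. ennreal (dirichlet_kernel {1..k} \<alpha>0 (\<lambda>j. real (hs j)) 1 v)
      \<partial>PiM {1..k} (\<lambda>_. lborel)) = ennreal (?D hs)" if "hs \<in> ?H" for hs
    using hs_ge_1[OF that] \<open>\<alpha>0 > 0\<close> by (intro nn_integral_dirichlet_kernel_nat) auto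
  have D_nonneg: "?D hs \<ge> 0" if "hs \<in> ?H" for hs
    using hs_ge_1[OF that] \<open>\<alpha>0 > 0\<close> by (intro prod_Gamma_div_pochhammer_nonneg) auto
  have "(\<integral>\<^sup>+ v. ennreal (joint_dens \<alpha> \<alpha>0 b0 nc d k t v) \<partial>(PiM {1..k} (\<lambda>_. lborel)))
      = ennreal (marg_dens \<alpha> \<alpha>0 b0 nc d k t)" if "t > 0" for t
  proof -
    let ?c = "\<lambda>hs. dens_prefactor \<alpha> \<alpha>0 b0 nc d k t * stirling_weight nc d k hs * t ^ sum hs {1..k}"
    have c_nonneg: "?c hs \<ge> 0" for hs
      using dens_prefactor_nonneg[OF that] that
      by (intro mult_nonneg_nonneg) (auto simp: stirling_weight_def intro: prod_nonneg)
    have "(\<integral>\<^sup>+ v. ennreal (joint_dens \<alpha> \<alpha>0 b0 nc d k t v) \<partial>(PiM {1..k} (\<lambda>_. lborel)))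
        = (\<integral>\<^sup>+ v. ennreal (\<Sum>hs\<in>?H. ?c hs * dirichlet_kernel {1..k} \<alpha>0 (\<lambda>j. real (hs j)) 1 v)
            \<partial>(PiM {1..k} (\<lambda>_. lborel)))"
      by (simp only: joint_dens_eq_sum_dirichlet_kernel[OF assms(7)])
    also have "\<dots> = ennreal (\<Sum>hs\<in>?H. ?c hs * ?D hs)"
      using c_nonneg D_nonneg integral_kernel
      by (intro nn_integral_sum_cmult_real) (auto simp: finite_exponent_box dirichlet_kernel_nonneg)
    also have "\<dots> = ennreal (marg_dens \<alpha> \<alpha>0 b0 nc d k t)"
      by (simp add: marg_dens_eq_sum_exponent_box sum_distrib_left mult_ac)
    finally show ?thesis .
  qed
  then show ?thesis by (intro exI[of _ 1]) simp
qed

end
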